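(* Let $G$ be an $(N,k)$ Adinkra with associated doubly even code $C$. For a closed walk in $G$, let $w\in\mathbb{Z}_2^N$ be the vector with $w_i=1$ exactly for those colors $i$ traversed an odd number of times. Then the nonzero codewords of $C$ correspond exactly to the closed walks of $G$ in which at least one edge color appears an odd number of times: for every such closed walk $w\in C\setminus\{0\}$, and every nonzero $c\in C$ arises as $w$ for some such closed walk.
   Context: An Adinkra of dimension $N$ is a finite connected simple graph $G=(V,E)$ with: a bipartition of $V$ into bosons and fermions (every edge joins a boson and a fermion); a height function $\mathrm{hgt}:V\to\mathbb{Z}$ with adjacent vertices at heights differing by $1$; a coloring of $E$ by colors $\{1,\dots,N\}$ such that each vertex is incident to exactly one edge of each color; an edge parity $\pi:E\to\mathbb{Z}_2$ (parity $1$ = dashed); such that every path with edge colors $(i,j)$, $i\ne j$, lies in a unique 4-cycle with colors $(i,j,i,j)$, each having an odd number of dashed edges. If $|V|=2^{N-k}$, $G$ is an $(N,k)$ Adinkra. A doubly even $(N,k)$ code is a $k$-dimensional subspace of $\mathbb{Z}_2^N$ all of whose elements have Hamming weight $\equiv0\pmod4$. Labeling the vertices of an $N$-cube Adinkra by $\mathbb{Z}_2^N$ so that color-$i$ edges join $v$ and $v+e_i$, the $(N,k)$ Adinkra $G$ is (up to switching, relabeling vertices and changing heights) obtained by identifying vertices whose labels differ by elements of a doubly even $(N,k)$ code $C$; this $C$ is the associated code of $G$. *)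

theory Defs
  imports Main
begin

text \<open>Vectors of Z_2^N are represented as subsets of the colour set {1..N}
  (a vector is the set of coordinates equal to 1); addition is symmetric
  difference and Hamming weight is cardinality.\<close>

definition vadd :: "nat set \<Rightarrow> nat set \<Rightarrow> nat set" where
  "vadd x y = (x - y) \<union> (y - x)"

definition doubly_even_code :: "nat \<Rightarrow> nat \<Rightarrow> nat set set \<Rightarrow> bool" where
  "doubly_even_code N k C \<longleftrightarrow>
     C \<subseteq> Pow {1..N} \<and> {} \<in> C \<and> (\<forall>x\<in>C. \<forall>y\<in>C. vadd x y \<in> C) \<and>
     card C = 2 ^ k \<and> (\<forall>x\<in>C. card x mod 4 = 0)"

definition is_walk :: "'v set \<Rightarrow> 'v set set \<Rightarrow> 'v list \<Rightarrow> bool" where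
  "is_walk V E vs \<longleftrightarrow> vs \<noteq> [] \<and> set vs \<subseteq> V \<and>
     (\<forall>t. Suc t < length vs \<longrightarrow> {vs ! t, vs ! Suc t} \<in> E)"

definition is_closed_walk :: "'v set \<Rightarrow> 'v set set \<Rightarrow> 'v list \<Rightarrow> bool" where
  "is_closed_walk V E vs \<longleftrightarrow> is_walk V E vs \<and> hd vs = last vs"

definition colour_count :: "('v set \<Rightarrow> nat) \<Rightarrow> 'v list \<Rightarrow> nat \<Rightarrow> nat" where
  "colour_count col vs i = card {t. Suc t < length vs \<and> col {vs ! t, vs ! Suc t} = i}"

definition walk_word :: "nat \<Rightarrow> ('v set \<Rightarrow> nat) \<Rightarrow> 'v list \<Rightarrow> nat set" where
  "walk_word N col vs = {i \<in> {1..N}. odd (colour_count col vs i)}"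

text \<open>Adinkra of dimension N: vertex set V, edges E (2-element subsets of V),
  bipartition bos (True = boson), height hgt, colouring col, parity par (True = dashed).\<close>
definition adinkra ::
  "nat \<Rightarrow> 'v set \<Rightarrow> 'v set set \<Rightarrow> ('v \<Rightarrow> bool) \<Rightarrow> ('v \<Rightarrow> int)
     \<Rightarrow> ('v set \<Rightarrow> nat) \<Rightarrow> ('v set \<Rightarrow> bool) \<Rightarrow> bool" where
  "adinkra N V E bos hgt col par \<longleftrightarrow>
     finite V \<and> V \<noteq> {} \<and>
     E \<subseteq> {{u, v} | u v. u \<in> V \<and> v \<in> V \<and> u \<noteq> v} \<and>
     (\<forall>u\<in>V. \<forall>v\<in>V. \<exists>vs. is_walk V E vs \<and> hd vs = u \<and> last vs = v) \<and>
     (\<forall>u v. {u, v} \<in> E \<longrightarrow> bos u \<noteq> bos v) \<and>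
     (\<forall>u v. {u, v} \<in> E \<longrightarrow> \<bar>hgt u - hgt v\<bar> = 1) \<and>
     (\<forall>e\<in>E. col e \<in> {1..N}) \<and>
     (\<forall>v\<in>V. \<forall>i\<in>{1..N}. \<exists>!e. e \<in> E \<and> v \<in> e \<and> col e = i) \<and>
     (\<forall>u v w i j. {u, v} \<in> E \<and> {v, w} \<in> E \<and> col {u, v} = i \<and> col {v, w} = j \<and> i \<noteq> j \<longrightarrow>
        (\<exists>!x. {w, x} \<in> E \<and> {x, u} \<in> E \<and> col {w, x} = i \<and> col {x, u} = j)) \<and>
     (\<forall>u v w x i j. {u, v} \<in> E \<and> {v, w} \<in> E \<and> {w, x} \<in> E \<and> {x, u} \<in> E \<and>
        col {u, v} = i \<and> col {v, w} = j \<and> col {w, x} = i \<and> col {x, u} = j \<and> i \<noteq> j \<longrightarrow>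
        odd (card (Set.filter par {{u, v}, {v, w}, {w, x}, {x, u}})))"

definition NK_adinkra ::
  "nat \<Rightarrow> nat \<Rightarrow> 'v set \<Rightarrow> 'v set set \<Rightarrow> ('v \<Rightarrow> bool) \<Rightarrow> ('v \<Rightarrow> int)
     \<Rightarrow> ('v set \<Rightarrow> nat) \<Rightarrow> ('v set \<Rightarrow> bool) \<Rightarrow> bool" where
  "NK_adinkra N k V E bos hgt col par \<longleftrightarrow>
     adinkra N V E bos hgt col par \<and> card V = 2 ^ (N - k)"

text \<open>C is the associated code of the (N,k) Adinkra: C is a doubly even (N,k) code and
  (up to switching, relabelling vertices and changing heights, none of which affect
  the coloured graph) G is the quotient of the N-cube by C: there is a surjection
  phi from Z_2^N onto V identifying exactly labels differing by a codeword, such that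
  colour-i edges join phi(v) and phi(v + e_i), and these are all edges.\<close>
definition associated_code ::
  "nat \<Rightarrow> nat \<Rightarrow> 'v set \<Rightarrow> 'v set set \<Rightarrow> ('v set \<Rightarrow> nat) \<Rightarrow> nat set set \<Rightarrow> bool" where
  "associated_code N k V E col C \<longleftrightarrow>
     doubly_even_code N k C \<and>
     (\<exists>\<phi> :: nat set \<Rightarrow> 'v.
        \<phi> ` Pow {1..N} = V \<and>
        (\<forall>x\<in>Pow {1..N}. \<forall>y\<in>Pow {1..N}. \<phi> x = \<phi> y \<longleftrightarrow> vadd x y \<in> C) \<and>
        (\<forall>x\<in>Pow {1..N}. \<forall>i\<in>{1..N}.
            {\<phi> x, \<phi> (vadd x {i})} \<in> E \<and> col {\<phi> x, \<phi> (vadd x {i})} = i) \<and>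
        (\<forall>e\<in>E. \<exists>x\<in>Pow {1..N}. \<exists>i\<in>{1..N}. e = {\<phi> x, \<phi> (vadd x {i})}))"

end

theory Submission
  imports Defs
begin

text \<open>Since G is the quotient of the N-cube by C, every walk lifts to the cube, and a colour-i
  step adds e_i to the label; hence a walk starting at label x ends at label x + w, where w is
  its word. The walk is closed iff x and x + w are identified, i.e. iff w lies in C.
  Conversely, flipping the coordinates of a codeword c one by one gives a walk from label 0
  to label c, which is the same vertex.\<close>

lemma vadd_empty_left [simp]: "vadd {} x = x"
  by (simp add: vadd_def)

lemma vadd_empty_right [simp]: "vadd x {} = x"
  by (simp add: vadd_def)

lemma vadd_assoc: "vadd (vadd x y) z = vadd x (vadd y z)"
  by (auto simp: vadd_def)

lemma vadd_cancel_right [simp]: "vadd (vadd x y) y = x"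
  by (auto simp: vadd_def)

lemma vadd_cancel_left [simp]: "vadd (vadd x y) x = y"
  by (auto simp: vadd_def)

lemma vadd_translate: "vadd (vadd x z) (vadd x' z) = vadd x x'"
  by (auto simp: vadd_def)

lemma vadd_subset: "x \<subseteq> S \<Longrightarrow> y \<subseteq> S \<Longrightarrow> vadd x y \<subseteq> S"
  by (auto simp: vadd_def)

definition odd_occurrences :: "(nat \<Rightarrow> nat) \<Rightarrow> nat \<Rightarrow> nat set" where
  "odd_occurrences f n = {i. odd (card {t. t < n \<and> f t = i})}"

lemma odd_occurrences_0 [simp]: "odd_occurrences f 0 = {}"
  by (simp add: odd_occurrences_def)

lemma odd_occurrences_Suc: "odd_occurrences f (Suc n) = vadd (odd_occurrences f n) {f n}"
proof -
  have "{t. t < Suc n \<and> f t = i} =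
      (if f n = i then insert n {t. t < n \<and> f t = i} else {t. t < n \<and> f t = i})" for i
    by (auto simp: less_Suc_eq)
  then show ?thesis
    by (auto simp: odd_occurrences_def vadd_def)
qed

lemma odd_occurrences_cong:
  assumes "\<And>t. t < n \<Longrightarrow> f t = g t"
  shows "odd_occurrences f n = odd_occurrences g n"
proof -
  have "{t. t < n \<and> f t = i} = {t. t < n \<and> g t = i}" for i
    using assms by auto
  then show ?thesis by (simp add: odd_occurrences_def)
qed

lemma odd_occurrences_subset: "(\<And>t. t < n \<Longrightarrow> f t \<in> S) \<Longrightarrow> odd_occurrences f n \<subseteq> S"
  by (induction n) (auto simp: odd_occurrences_Suc vadd_def)

lemma odd_occurrences_nth_take:
  assumes "distinct l" and "j \<le> length l"
  shows "odd_occurrences (nth l) j = set (take j l)"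
  using assms(2)
proof (induction j)
  case (Suc j)
  have "distinct (take (Suc j) l)"
    using assms(1) by simp
  with Suc.prems have "l ! j \<notin> set (take j l)"
    by (simp add: take_Suc_conv_app_nth)
  with Suc show ?case
    by (auto simp: odd_occurrences_Suc vadd_def take_Suc_conv_app_nth)
qed simp

corollary odd_occurrences_distinct: "distinct l \<Longrightarrow> odd_occurrences (nth l) (length l) = set l"
  by (simp add: odd_occurrences_nth_take)

definition walk_colours :: "('v set \<Rightarrow> nat) \<Rightarrow> 'v list \<Rightarrow> nat \<Rightarrow> nat" where
  "walk_colours col vs t = col {vs ! t, vs ! Suc t}"

lemma walk_word_eq_Int_odd_occurrences:
  "walk_word N col vs = {1..N} \<inter> odd_occurrences (walk_colours col vs) (length vs - 1)"
proof -
  have "{t. Suc t < length vs \<and> col {vs ! t, vs ! Suc t} = i} =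
      {t. t < length vs - 1 \<and> walk_colours col vs t = i}" for i
    by (auto simp: walk_colours_def)
  then show ?thesis
    by (auto simp: walk_word_def colour_count_def odd_occurrences_def)
qed

definition cube_quotient ::
  "nat \<Rightarrow> 'v set \<Rightarrow> 'v set set \<Rightarrow> ('v set \<Rightarrow> nat) \<Rightarrow> nat set set \<Rightarrow> (nat set \<Rightarrow> 'v) \<Rightarrow> bool" where
  "cube_quotient N V E col C \<phi> \<longleftrightarrow>
     \<phi> ` Pow {1..N} = V \<and>
     (\<forall>x\<in>Pow {1..N}. \<forall>y\<in>Pow {1..N}. \<phi> x = \<phi> y \<longleftrightarrow> vadd x y \<in> C) \<and>
     (\<forall>x\<in>Pow {1..N}. \<forall>i\<in>{1..N}.
         {\<phi> x, \<phi> (vadd x {i})} \<in> E \<and> col {\<phi> x, \<phi> (vadd x {i})} = i) \<and>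
     (\<forall>e\<in>E. \<exists>x\<in>Pow {1..N}. \<exists>i\<in>{1..N}. e = {\<phi> x, \<phi> (vadd x {i})})"

lemma associated_codeE:
  assumes "associated_code N k V E col C"
  obtains \<phi> where "doubly_even_code N k C" and "cube_quotient N V E col C \<phi>"
  using assms unfolding associated_code_def cube_quotient_def by blast

context
  fixes N V E col C \<phi>
  assumes cq: "cube_quotient N V E col C \<phi>"
begin

lemma cube_quotient_eq_iff:
  "x \<subseteq> {1..N} \<Longrightarrow> y \<subseteq> {1..N} \<Longrightarrow> \<phi> x = \<phi> y \<longleftrightarrow> vadd x y \<in> C"
  using cq by (simp add: cube_quotient_def)

lemma cube_quotient_edge:
  "x \<subseteq> {1..N} \<Longrightarrow> i \<in> {1..N} \<Longrightarrow>
    {\<phi> x, \<phi> (vadd x {i})} \<in> E \<and> col {\<phi> x, \<phi> (vadd x {i})} = i"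
  using cq by (simp add: cube_quotient_def)

lemma cube_quotient_vertex: "v \<in> V \<Longrightarrow> \<exists>x\<subseteq>{1..N}. v = \<phi> x"
  using cq by (auto simp: cube_quotient_def)

lemma cube_quotient_vertex_in: "x \<subseteq> {1..N} \<Longrightarrow> \<phi> x \<in> V"
  using cq by (auto simp: cube_quotient_def)

lemma cube_quotient_translate:
  assumes "x \<subseteq> {1..N}" "x' \<subseteq> {1..N}" "z \<subseteq> {1..N}" "\<phi> x = \<phi> x'"
  shows "\<phi> (vadd x z) = \<phi> (vadd x' z)"
  using assms by (simp add: cube_quotient_eq_iff vadd_subset vadd_translate)

lemma cube_quotient_edge_colour:
  assumes "e \<in> E"
  shows "col e \<in> {1..N}"
proof -
  from assms cq obtain x i where "x \<subseteq> {1..N}" "i \<in> {1..N}" "e = {\<phi> x, \<phi> (vadd x {i})}"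
    by (auto simp: cube_quotient_def)
  then show ?thesis using cube_quotient_edge by simp
qed

text \<open>The colour of an edge at the vertex labelled y determines its other end, whichever
  label of that vertex the edge was given by.\<close>

lemma cube_quotient_step:
  assumes y: "y \<subseteq> {1..N}" and e: "{\<phi> y, v} \<in> E"
  shows "v = \<phi> (vadd y {col {\<phi> y, v}})"
proof -
  from e cq obtain x i where x: "x \<subseteq> {1..N}" and i: "i \<in> {1..N}"
    and xi: "{\<phi> y, v} = {\<phi> x, \<phi> (vadd x {i})}"
    by (auto simp: cube_quotient_def)
  have xi': "vadd x {i} \<subseteq> {1..N}" and col: "col {\<phi> y, v} = i"
    using x i xi cube_quotient_edge[OF x i] by (auto simp: vadd_subset)
  from xi consider "\<phi> y = \<phi> x" "v = \<phi> (vadd x {i})" | "\<phi> y = \<phi> (vadd x {i})" "v = \<phi> x"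
    by (auto simp: doubleton_eq_iff)
  then show ?thesis
  proof cases
    case 1
    then show ?thesis using cube_quotient_translate[OF y x _ 1(1), of "{i}"] i col by simp
  next
    case 2
    then show ?thesis using cube_quotient_translate[OF y xi' _ 2(1), of "{i}"] i col by simp
  qed
qed

lemma odd_occurrences_walk_colours_subset:
  assumes "is_walk V E vs" and "n \<le> length vs - 1"
  shows "odd_occurrences (walk_colours col vs) n \<subseteq> {1..N}"
proof (rule odd_occurrences_subset)
  fix t assume "t < n"
  with assms have "{vs ! t, vs ! Suc t} \<in> E"
    by (auto simp: is_walk_def)
  then show "walk_colours col vs t \<in> {1..N}"
    unfolding walk_colours_def by (rule cube_quotient_edge_colour)
qed

lemma walk_word_eq_odd_occurrences:
  "is_walk V E vs \<Longrightarrow> walk_word N col vs = odd_occurrences (walk_colours col vs) (length vs - 1)"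
  using odd_occurrences_walk_colours_subset[of vs "length vs - 1"] by (auto simp: walk_word_eq_Int_odd_occurrences)

lemma walk_lift:
  assumes walk: "is_walk V E vs" and x: "x \<subseteq> {1..N}" and start: "vs ! 0 = \<phi> x"
    and "t < length vs"
  shows "vs ! t = \<phi> (vadd x (odd_occurrences (walk_colours col vs) t))"
  using \<open>t < length vs\<close>
proof (induction t)
  case (Suc t)
  let ?y = "vadd x (odd_occurrences (walk_colours col vs) t)"
  have y: "?y \<subseteq> {1..N}"
    using x odd_occurrences_walk_colours_subset[OF walk, of t] Suc.prems by (simp add: vadd_subset)
  have "{vs ! t, vs ! Suc t} \<in> E"
    using walk Suc.prems by (simp add: is_walk_def)
  moreover have IH: "vs ! t = \<phi> ?y"
    using Suc by simp
  ultimately have "vs ! Suc t = \<phi> (vadd ?y {walk_colours col vs t})"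
    using cube_quotient_step[OF y, of "vs ! Suc t"] unfolding walk_colours_def IH by simp
  then show ?case
    by (simp add: odd_occurrences_Suc vadd_assoc)
qed (use start in simp)

lemma closed_walk_word_in_code:
  assumes "is_closed_walk V E vs"
  shows "walk_word N col vs \<in> C"
proof -
  have walk: "is_walk V E vs" and ends: "hd vs = last vs"
    using assms by (simp_all add: is_closed_walk_def)
  then have ne: "vs \<noteq> []" and "vs ! 0 \<in> V"
    by (auto simp: is_walk_def)
  then obtain x where x: "x \<subseteq> {1..N}" "vs ! 0 = \<phi> x"
    using cube_quotient_vertex by blast
  define w where "w = walk_word N col vs"
  have w: "w \<subseteq> {1..N}"
    by (auto simp: w_def walk_word_def)
  have "vs ! (length vs - 1) = \<phi> (vadd x w)"
    using walk_lift[OF walk x, of "length vs - 1"] walk_word_eq_odd_occurrences[OF walk] ne by (simp add: w_def)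
  moreover have "vs ! (length vs - 1) = vs ! 0"
    using ends ne by (simp add: hd_conv_nth last_conv_nth)
  ultimately have "vadd (vadd x w) x \<in> C"
    using cube_quotient_eq_iff x w vadd_subset by metis
  then show ?thesis by (simp add: w_def)
qed

lemma walk_with_colours:
  assumes x: "x \<subseteq> {1..N}" and l: "set l \<subseteq> {1..N}"
  defines "w \<equiv> odd_occurrences (nth l) (length l)"
  shows "\<exists>vs. is_walk V E vs \<and> hd vs = \<phi> x \<and> last vs = \<phi> (vadd x w) \<and> walk_word N col vs = w"
proof -
  define y where "y j = vadd x (odd_occurrences (nth l) j)" for j
  define vs where "vs = map (\<phi> \<circ> y) [0..<Suc (length l)]"
  have y: "y j \<subseteq> {1..N}" if "j \<le> length l" for j
  proof -
    have "odd_occurrences (nth l) j \<subseteq> {1..N}"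
    proof (rule odd_occurrences_subset)
      fix t assume "t < j"
      with that have "t < length l"
        by simp
      then show "l ! t \<in> {1..N}"
        using l nth_mem by blast
    qed
    then show ?thesis
      using x by (simp add: y_def vadd_subset)
  qed
  have len: "length vs = Suc (length l)" and ne: "vs \<noteq> []"
    by (simp_all add: vs_def)
  have nth: "vs ! t = \<phi> (y t)" if "t \<le> length l" for t
    using that by (simp add: vs_def nth_map_upt del: upt_Suc)
  have edge: "{vs ! t, vs ! Suc t} \<in> E \<and> walk_colours col vs t = l ! t" if "t < length l" for t
  proof -
    have "y (Suc t) = vadd (y t) {l ! t}"
      by (simp add: y_def odd_occurrences_Suc vadd_assoc)
    moreover have "l ! t \<in> {1..N}"
      using l nth_mem[OF that] by blast
    ultimately show ?thesis
      using cube_quotient_edge[OF y] that by (simp add: nth walk_colours_def)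
  qed
  have walk: "is_walk V E vs"
    unfolding is_walk_def
  proof (intro conjI allI impI)
    show "set vs \<subseteq> V"
      unfolding vs_def by (auto simp del: upt_Suc intro!: cube_quotient_vertex_in y)
    fix t assume "Suc t < length vs"
    then show "{vs ! t, vs ! Suc t} \<in> E"
      using edge len by simp
  qed (rule ne)
  have "walk_word N col vs = w"
    using walk_word_eq_odd_occurrences[OF walk] odd_occurrences_cong[of "length l" "walk_colours col vs" "nth l"]
      edge len by (simp add: w_def)
  moreover have "hd vs = \<phi> x" and "last vs = \<phi> (vadd x w)"
    using nth[of 0] nth[of "length l"] ne len by (simp_all add: hd_conv_nth last_conv_nth y_def w_def)
  ultimately show ?thesis
    using walk by blast
qed

lemma code_word_closed_walk:
  assumes c: "c \<in> C" "c \<subseteq> {1..N}"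
  shows "\<exists>vs. is_closed_walk V E vs \<and> walk_word N col vs = c"
proof -
  define l where "l = sorted_list_of_set c"
  have "finite c"
    using c(2) finite_subset by blast
  then have "distinct l" "set l = c"
    by (simp_all add: l_def)
  then have "odd_occurrences (nth l) (length l) = c"
    by (simp add: odd_occurrences_distinct)
  moreover have "\<phi> c = \<phi> {}"
    using c cube_quotient_eq_iff[of c "{}"] by simp
  moreover obtain vs where "is_walk V E vs" "hd vs = \<phi> {}"
    "last vs = \<phi> (odd_occurrences (nth l) (length l))"
    "walk_word N col vs = odd_occurrences (nth l) (length l)"
    using walk_with_colours[of "{}" l] c(2) \<open>set l = c\<close> by auto
  ultimately show ?thesis
    by (auto simp: is_closed_walk_def)
qed

end

theorem mainTheorem16:
  fixes N k :: nat and V :: "'v set" and E :: "'v set set" and bos :: "'v \<Rightarrow> bool"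
    and hgt :: "'v \<Rightarrow> int" and col :: "'v set \<Rightarrow> nat" and par :: "'v set \<Rightarrow> bool"
    and C :: "nat set set"
  assumes "NK_adinkra N k V E bos hgt col par"
    and "associated_code N k V E col C"
  shows "(\<forall>vs. is_closed_walk V E vs \<and> walk_word N col vs \<noteq> {}
              \<longrightarrow> walk_word N col vs \<in> C - {{}})
       \<and> (\<forall>c\<in>C - {{}}. \<exists>vs. is_closed_walk V E vs \<and> walk_word N col vs \<noteq> {}
              \<and> walk_word N col vs = c)"
proof -
  obtain \<phi> where code: "doubly_even_code N k C" and cq: "cube_quotient N V E col C \<phi>"
    using assms(2) by (rule associated_codeE)
  have "C \<subseteq> Pow {1..N}"
    using code by (simp add: doubly_even_code_def)
  then show ?thesis
    using closed_walk_word_in_code[OF cq] code_word_closed_walk[OF cq] by blast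
qed

end
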